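(* Assume $R\neq0$. Then: (1) every $\nu_{(w,e)}$ with $w=\sum_n r_nx^n\in W_1$ satisfying $\sum_n r_n=1$ is a right unit of $T_e$; in particular $T_e$ has more than one right unit; (2) every minimal prime ideal $I\neq T_e$ of $End_1$ has at most one right unit. Consequently, $T_e$ is the unique minimal prime ideal of $End_1$ having more than one right unit.
   Context: $R$ is a commutative associative ring with unit. A group representation $(A,G,\cdot)$ is an $R$-module $A$ with a right action of the group $G$ by $R$-module automorphisms; homomorphisms are pairs $(\mu^{(1)},\mu^{(2)})$ ($R$-linear map, group homomorphism) with $\mu^{(1)}(a\cdot g)=\mu^{(1)}(a)\bullet\mu^{(2)}(g)$. $F_1=\langle x\rangle$ is infinite cyclic with identity $e$, and $W_1=RF_1$ is the group algebra on which $F_1$ acts by right multiplication. $End_1$ is the monoid of endomorphisms of $(W_1,F_1)$. $\nu_{(w,g)}$ denotes the endomorphism with $1\mapsto w$ and $x\mapsto g$, and $T_e=\{\nu_{(w,e)}:w\in W_1\}$. Ideals of a monoid $M$ are subsets $I$ with $MI\cup IM\subseteq I$; $I$ is prime if $ab\in I$ implies $a\in I$ or $b\in I$. A right unit of $I$ is $u\in I$ with $\nu\circ u=\nu$ for all $\nu\in I$. *)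

theory Defs
  imports Main "HOL-Library.Poly_Mapping"
begin

text \<open>F_1 is represented additively by int: the exponent n stands for x^n,
  so the generator x is 1 and the identity e is 0.  W_1 is the group ring
  of finitely supported functions with convolution product).\<close>

type_synonym 'r W1 = "int \<Rightarrow>\<^sub>0 'r"

definition xpow :: "int \<Rightarrow> 'r::comm_ring_1 W1" where
  "xpow n = Poly_Mapping.single n 1"

definition act :: "'r::comm_ring_1 W1 \<Rightarrow> int \<Rightarrow> 'r W1" where
  "act a g = a * xpow g"

definition smul :: "'r::comm_ring_1 \<Rightarrow> 'r W1 \<Rightarrow> 'r W1" where
  "smul r a = Poly_Mapping.map (\<lambda>c. r * c) a"

definition R_linear :: "('r::comm_ring_1 W1 \<Rightarrow> 'r W1) \<Rightarrow> bool" where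
  "R_linear f \<longleftrightarrow> (\<forall>a b. f (a + b) = f a + f b) \<and> (\<forall>r a. f (smul r a) = smul r (f a))"

definition group_hom_F1 :: "(int \<Rightarrow> int) \<Rightarrow> bool" where
  "group_hom_F1 h \<longleftrightarrow> (\<forall>g g'. h (g + g') = h g + h g')"

type_synonym 'r endo = "('r W1 \<Rightarrow> 'r W1) \<times> (int \<Rightarrow> int)"

definition End1 :: "'r::comm_ring_1 endo set" where
  "End1 = {(m1, m2). R_linear m1 \<and> group_hom_F1 m2 \<and>
             (\<forall>a g. m1 (act a g) = act (m1 a) (m2 g))}"

definition ecomp :: "'r endo \<Rightarrow> 'r endo \<Rightarrow> 'r endo" where
  "ecomp u v = (fst u \<circ> fst v, snd u \<circ> snd v)"

definition nu :: "'r::comm_ring_1 W1 \<Rightarrow> int \<Rightarrow> 'r endo" where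
  "nu w g = (THE u. u \<in> End1 \<and> fst u 1 = w \<and> snd u 1 = g)"

definition T_e :: "'r::comm_ring_1 endo set" where
  "T_e = {nu w 0 | w. True}"

definition is_ideal :: "'r::comm_ring_1 endo set \<Rightarrow> bool" where
  "is_ideal I \<longleftrightarrow> I \<noteq> {} \<and> I \<subseteq> End1 \<and>
     (\<forall>m\<in>End1. \<forall>i\<in>I. ecomp m i \<in> I \<and> ecomp i m \<in> I)"

definition is_prime_ideal :: "'r::comm_ring_1 endo set \<Rightarrow> bool" where
  "is_prime_ideal I \<longleftrightarrow> is_ideal I \<and> I \<noteq> End1 \<and>
     (\<forall>a\<in>End1. \<forall>b\<in>End1. ecomp a b \<in> I \<longrightarrow> a \<in> I \<or> b \<in> I)"

definition is_minimal_prime_ideal :: "'r::comm_ring_1 endo set \<Rightarrow> bool" where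
  "is_minimal_prime_ideal I \<longleftrightarrow> is_prime_ideal I \<and>
     (\<forall>J. is_prime_ideal J \<and> J \<subseteq> I \<longrightarrow> J = I)"

definition is_right_unit :: "'r endo \<Rightarrow> 'r endo set \<Rightarrow> bool" where
  "is_right_unit u I \<longleftrightarrow> u \<in> I \<and> (\<forall>v\<in>I. ecomp v u = v)"

definition coeff_sum :: "'r::comm_ring_1 W1 \<Rightarrow> 'r" where
  "coeff_sum w = (\<Sum>n\<in>Poly_Mapping.keys w. Poly_Mapping.lookup w n)"

end

theory Submission
  imports Defs
begin

text \<open>An endomorphism of \<open>(W\<^sub>1, F\<^sub>1)\<close> is determined by the image \<open>w\<close> of \<open>1\<close> and
  the exponent \<open>k\<close> of the image of \<open>x\<close>: it is \<open>\<nu>(w, x^k) : a(x) \<mapsto> w \<cdot> a(x^k)\<close>, and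
  \<open>\<nu>(w, x^k) \<circ> \<nu>(w', x^k') = \<nu>(w \<cdot> w'(x^k), x^(k k'))\<close>.  So \<open>T\<^sub>e = {k = 0}\<close> is prime,
  as \<open>k k' = 0\<close> forces a factor into \<open>T\<^sub>e\<close>, and it is minimal: a prime \<open>J \<subseteq> T\<^sub>e\<close>
  contains some \<open>\<nu>(w, e) = \<nu>(w, x) \<circ> \<nu>(1, e)\<close> with \<open>\<nu>(w, x) \<notin> J\<close>, hence \<open>\<nu>(1, e)\<close>,
  and then every \<open>\<nu>(v, e) = \<nu>(v, e) \<circ> \<nu>(1, e)\<close>.  On \<open>T\<^sub>e\<close> the product is
  \<open>\<nu>(v, e) \<circ> \<nu>(w, e) = \<nu>(v \<cdot> \<Sigma>\<^sub>n r\<^sub>n, e)\<close> for \<open>w = \<Sigma>\<^sub>n r\<^sub>n x^n\<close>, so every \<open>w\<close> with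
  coefficient sum 1 (e.g. \<open>1\<close> and \<open>x\<close>) gives a right unit.  Conversely, two right units
  \<open>\<nu>(w, x^k)\<close>, \<open>\<nu>(w', x^k')\<close> of an ideal have \<open>k = k' = k\<^sup>2\<close>.  If \<open>k = 1\<close> then
  \<open>w w' = w\<close> and \<open>w' w = w'\<close>, so they coincide; if \<open>k = 0\<close> the ideal lies in \<open>T\<^sub>e\<close>,
  so a prime ideal with two right units is \<open>T\<^sub>e\<close> by minimality.\<close>

lemma poly_mapping_single_induct [case_names zero add single]:
  assumes "P 0"
    and "\<And>a b. P a \<Longrightarrow> P b \<Longrightarrow> P (a + b)"
    and "\<And>n c. P (Poly_Mapping.single n c)"
  shows "P a"
proof (induct a rule: update_induct)
  case (update f n c)
  then have "Poly_Mapping.update n c f = f + Poly_Mapping.single n c"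
    by (intro poly_mapping_eqI)
      (auto simp: lookup_update lookup_add lookup_single in_keys_iff when_def)
  with update assms show ?case by metis
qed (use assms in simp)

lemma single_sum: "Poly_Mapping.single k (sum f S) = (\<Sum>x\<in>S. Poly_Mapping.single k (f x))"
  by (induct S rule: infinite_finite_induct) (simp_all add: single_add)

definition subst_xpow :: "int \<Rightarrow> 'r::comm_ring_1 W1 \<Rightarrow> 'r W1" where
  "subst_xpow k a =
     (\<Sum>n\<in>Poly_Mapping.keys a. Poly_Mapping.single (k * n) (Poly_Mapping.lookup a n))"

lemma subst_xpow_conv_sum:
  assumes "finite S" "Poly_Mapping.keys a \<subseteq> S"
  shows "subst_xpow k a = (\<Sum>n\<in>S. Poly_Mapping.single (k * n) (Poly_Mapping.lookup a n))"
  unfolding subst_xpow_def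
  by (rule sum.mono_neutral_left) (use assms in \<open>auto simp: in_keys_iff\<close>)

lemma subst_xpow_add: "subst_xpow k (a + b) = subst_xpow k a + subst_xpow k b"
proof -
  let ?S = "Poly_Mapping.keys a \<union> Poly_Mapping.keys b"
  have "subst_xpow k (a + b) =
      (\<Sum>n\<in>?S. Poly_Mapping.single (k * n) (Poly_Mapping.lookup (a + b) n))"
    by (rule subst_xpow_conv_sum) (simp_all add: keys_add)
  also have "\<dots> = (\<Sum>n\<in>?S. Poly_Mapping.single (k * n) (Poly_Mapping.lookup a n))
      + (\<Sum>n\<in>?S. Poly_Mapping.single (k * n) (Poly_Mapping.lookup b n))"
    by (simp add: lookup_add single_add sum.distrib)
  also have "\<dots> = subst_xpow k a + subst_xpow k b"
    using subst_xpow_conv_sum[of ?S a k] subst_xpow_conv_sum[of ?S b k] by simp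
  finally show ?thesis .
qed

lemma subst_xpow_single [simp]:
  "subst_xpow k (Poly_Mapping.single n c) = Poly_Mapping.single (k * n) c"
  by (subst subst_xpow_conv_sum[of "{n}"]) simp_all

lemma subst_xpow_zero [simp]: "subst_xpow k 0 = 0"
  by (simp add: subst_xpow_def)

lemma subst_xpow_one [simp]: "subst_xpow k 1 = 1"
  using subst_xpow_single[of k 0 1] by simp

lemma subst_xpow_1 [simp]: "subst_xpow 1 a = a"
  by (induct a rule: poly_mapping_single_induct) (simp_all add: subst_xpow_add)

lemma subst_xpow_0: "subst_xpow 0 a = Poly_Mapping.single 0 (coeff_sum a)"
  by (simp add: subst_xpow_def coeff_sum_def single_sum)

lemma subst_xpow_mult_const:
  "subst_xpow k (Poly_Mapping.single 0 r * a) = Poly_Mapping.single 0 r * subst_xpow k a"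
  by (induct a rule: poly_mapping_single_induct)
    (simp_all add: subst_xpow_add distrib_left mult_single)

lemma subst_xpow_mult_xpow: "subst_xpow k (a * xpow g) = subst_xpow k a * xpow (k * g)"
  by (induct a rule: poly_mapping_single_induct)
    (simp_all add: xpow_def subst_xpow_add distrib_right mult_single algebra_simps)

lemma smul_eq_mult_single: "smul r a = Poly_Mapping.single 0 r * a"
  by (simp add: smul_def mult_map_scale_conv_mult)

lemma group_hom_F1_eq_mult:
  assumes "group_hom_F1 h"
  shows "h g = h 1 * g"
proof -
  have h_add: "h (a + b) = h a + h b" for a b
    using assms by (simp add: group_hom_F1_def)
  show ?thesis
  proof (induct g rule: int_induct[where k = 0])
    case base
    show ?case using h_add[of 0 0] by simp
  next
    case (step1 i)
    then show ?case using h_add[of i 1] by (simp add: algebra_simps)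
  next
    case (step2 i)
    then show ?case using h_add[of "i - 1" 1] by (simp add: algebra_simps)
  qed
qed

lemma End1_fst_eq:
  assumes "(m1, m2) \<in> End1"
  shows "m1 a = m1 1 * subst_xpow (m2 1) a"
proof -
  have lin: "R_linear m1" and hom: "group_hom_F1 m2"
    and equiv: "\<And>a g. m1 (act a g) = act (m1 a) (m2 g)"
    using assms by (auto simp: End1_def)
  have m1_add: "m1 (a + b) = m1 a + m1 b" for a b
    using lin by (simp add: R_linear_def)
  show ?thesis
  proof (induct a rule: poly_mapping_single_induct)
    case zero
    show ?case using m1_add[of 0 0] by simp
  next
    case (add a b)
    then show ?case by (simp add: m1_add subst_xpow_add distrib_left)
  next
    case (single n c)
    have "Poly_Mapping.single n c = smul c (act 1 n)"
      by (simp add: smul_eq_mult_single act_def xpow_def mult_single)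
    then have "m1 (Poly_Mapping.single n c) = smul c (act (m1 1) (m2 n))"
      using lin by (simp add: R_linear_def equiv)
    also have "\<dots> = m1 1 * (Poly_Mapping.single 0 c * Poly_Mapping.single (m2 1 * n) 1)"
      by (simp add: smul_eq_mult_single act_def xpow_def group_hom_F1_eq_mult[OF hom, of n]
          mult.left_commute)
    also have "\<dots> = m1 1 * subst_xpow (m2 1) (Poly_Mapping.single n c)"
      by (simp add: mult_single)
    finally show ?case .
  qed
qed

definition mk_endo :: "'r::comm_ring_1 W1 \<Rightarrow> int \<Rightarrow> 'r endo" where
  "mk_endo w k = (\<lambda>a. w * subst_xpow k a, \<lambda>g. k * g)"

lemma mk_endo_in_End1: "mk_endo w k \<in> End1"
proof -
  have "w * subst_xpow k (Poly_Mapping.single 0 r * a) = Poly_Mapping.single 0 r * (w * subst_xpow k a)"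
    for r a
    by (simp add: subst_xpow_mult_const mult.left_commute)
  moreover have "w * subst_xpow k (a * xpow g) = w * subst_xpow k a * xpow (k * g)" for a g
    by (simp add: subst_xpow_mult_xpow mult.assoc)
  ultimately show ?thesis
    unfolding End1_def mk_endo_def R_linear_def group_hom_F1_def act_def smul_eq_mult_single
    by (auto simp: subst_xpow_add distrib_left distrib_right)
qed

lemma End1_eq_mk_endo:
  assumes "u \<in> End1"
  shows "u = mk_endo (fst u 1) (snd u 1)"
proof -
  obtain m1 m2 where u: "u = (m1, m2)"
    by force
  have "m1 = (\<lambda>a. m1 1 * subst_xpow (m2 1) a)"
    using End1_fst_eq assms u by blast
  moreover have "m2 = (\<lambda>g. m2 1 * g)"
    using assms u group_hom_F1_eq_mult by (fastforce simp: End1_def)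
  ultimately show ?thesis
    by (simp add: u mk_endo_def)
qed

lemma nu_eq_mk_endo: "nu w k = mk_endo w k"
  unfolding nu_def
proof (rule the_equality)
  show "mk_endo w k \<in> End1 \<and> fst (mk_endo w k) 1 = w \<and> snd (mk_endo w k) 1 = k"
    by (simp add: mk_endo_in_End1) (simp add: mk_endo_def)
qed (use End1_eq_mk_endo in metis)

lemma nu_in_End1: "nu w k \<in> End1"
  by (simp add: nu_eq_mk_endo mk_endo_in_End1)

lemma End1_eq_nu: "u \<in> End1 \<Longrightarrow> u = nu (fst u 1) (snd u 1)"
  by (simp add: nu_eq_mk_endo flip: End1_eq_mk_endo)

lemma End1_obtain_nu:
  assumes "u \<in> End1"
  obtains w k where "u = nu w k"
  using End1_eq_nu[OF assms] by blast

lemma nu_eq_iff: "nu w k = nu w' k' \<longleftrightarrow> w = w' \<and> k = k'"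
  by (auto simp: nu_eq_mk_endo mk_endo_def dest: fun_cong[of _ _ 1])

lemma ecomp_closed_End1: "u \<in> End1 \<Longrightarrow> v \<in> End1 \<Longrightarrow> ecomp u v \<in> End1"
  unfolding End1_def ecomp_def R_linear_def group_hom_F1_def by auto

lemma ecomp_nu: "ecomp (nu w k) (nu w' k') = nu (w * subst_xpow k w') (k * k')"
proof -
  have "ecomp (nu w k) (nu w' k') \<in> End1"
    by (simp add: ecomp_closed_End1 nu_in_End1)
  from End1_eq_nu[OF this] show ?thesis
    by (simp add: ecomp_def nu_eq_mk_endo mk_endo_def)
qed

lemma mem_T_e_iff: "u \<in> T_e \<longleftrightarrow> (\<exists>w. u = nu w 0)"
  by (simp add: T_e_def)

lemma is_ideal_T_e: "is_ideal T_e"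
  unfolding is_ideal_def
proof (intro conjI ballI)
  fix m i :: "'r::comm_ring_1 endo"
  assume "m \<in> End1" "i \<in> T_e"
  then obtain a k b where "m = nu a k" "i = nu b 0"
    by (auto simp: mem_T_e_iff elim: End1_obtain_nu)
  then show "ecomp m i \<in> T_e" "ecomp i m \<in> T_e"
    by (auto simp: ecomp_nu mem_T_e_iff)
next
  show "T_e \<noteq> {}"
    by (metis empty_iff mem_T_e_iff)
  show "T_e \<subseteq> End1"
    by (auto simp: mem_T_e_iff nu_in_End1)
qed

lemma is_prime_ideal_T_e: "is_prime_ideal T_e"
  unfolding is_prime_ideal_def
proof (intro conjI ballI impI)
  have "nu 1 1 \<notin> T_e"
    by (simp add: mem_T_e_iff nu_eq_iff)
  then show "T_e \<noteq> End1"
    using nu_in_End1 by blast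
next
  fix a b :: "'r::comm_ring_1 endo"
  assume "a \<in> End1" "b \<in> End1" "ecomp a b \<in> T_e"
  then obtain w k w' k' where "a = nu w k" "b = nu w' k'" "k * k' = 0"
    by (auto simp: mem_T_e_iff ecomp_nu nu_eq_iff elim!: End1_obtain_nu)
  then show "a \<in> T_e \<or> b \<in> T_e"
    by (auto simp: mem_T_e_iff)
qed (fact is_ideal_T_e)

lemma prime_ideal_subset_T_e_eq:
  assumes J: "is_prime_ideal J" and sub: "J \<subseteq> T_e"
  shows "J = T_e"
proof
  have ideal: "is_ideal J"
    using J by (simp add: is_prime_ideal_def)
  then obtain j where "j \<in> J"
    by (auto simp: is_ideal_def)
  then obtain w where w: "nu w 0 \<in> J"
    using sub by (metis mem_T_e_iff subsetD)
  have "ecomp (nu w 1) (nu 1 0) \<in> J" "nu w 1 \<notin> J"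
    using w sub by (auto simp: ecomp_nu mem_T_e_iff nu_eq_iff)
  then have unit: "nu 1 0 \<in> J"
    using J nu_in_End1 unfolding is_prime_ideal_def by blast
  have "ecomp (nu v 0) (nu 1 0) \<in> J" for v
    using ideal unit nu_in_End1 unfolding is_ideal_def by blast
  then show "T_e \<subseteq> J"
    by (auto simp: mem_T_e_iff ecomp_nu)
qed (fact sub)

lemma is_minimal_prime_ideal_T_e: "is_minimal_prime_ideal T_e"
  by (simp add: is_minimal_prime_ideal_def is_prime_ideal_T_e prime_ideal_subset_T_e_eq)

lemma is_right_unit_T_e:
  assumes "coeff_sum w = 1"
  shows "is_right_unit (nu w 0) T_e"
  using assms by (auto simp: is_right_unit_def mem_T_e_iff ecomp_nu subst_xpow_0)

lemma T_e_two_right_units: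
  assumes "(0::'r::comm_ring_1) \<noteq> 1"
  shows "\<exists>u v. u \<noteq> v \<and> is_right_unit u (T_e::'r endo set) \<and> is_right_unit v T_e"
proof (intro exI conjI)
  have "Poly_Mapping.lookup (1::'r W1) 0 \<noteq> Poly_Mapping.lookup (xpow 1) 0"
    using assms by (simp add: xpow_def lookup_single_not_eq)
  then show "nu 1 0 \<noteq> (nu (xpow 1) 0 :: 'r endo)"
    by (auto simp: nu_eq_iff)
qed (simp_all add: is_right_unit_T_e coeff_sum_def xpow_def)

lemma right_unit_subset_T_e:
  assumes "I \<subseteq> End1" "is_right_unit (nu w 0) I"
  shows "I \<subseteq> T_e"
proof
  fix u
  assume "u \<in> I"
  moreover obtain a j where "u = nu a j"
    using \<open>u \<in> I\<close> assms(1) by (blast elim: End1_obtain_nu)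
  ultimately have "nu (a * subst_xpow j w) 0 = nu a j"
    using assms(2) by (auto simp: is_right_unit_def ecomp_nu)
  then show "u \<in> T_e"
    using \<open>u = nu a j\<close> by (auto simp: nu_eq_iff mem_T_e_iff)
qed

lemma right_units_eq_or_exponent_0:
  assumes "is_right_unit (nu w k) I" "is_right_unit (nu w' k') I"
  shows "nu w k = nu w' k' \<or> k = 0"
proof -
  have "ecomp (nu w k) (nu w' k') = nu w k" "ecomp (nu w' k') (nu w k) = nu w' k'"
    "ecomp (nu w k) (nu w k) = nu w k"
    using assms by (auto simp: is_right_unit_def)
  then have uv: "w * subst_xpow k w' = w" "k * k' = k"
    and vu: "w' * subst_xpow k' w = w'" "k' * k = k'"
    and uu: "k * k = k"
    by (simp_all add: ecomp_nu nu_eq_iff)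
  have "k = k'"
    using uv(2) vu(2) by (metis mult.commute)
  from uu have "k = 0 \<or> k = 1"
    by (metis mult_cancel_left mult.right_neutral)
  moreover have "w = w'" if "k = 1"
    using uv(1) vu(1) that \<open>k = k'\<close> by (simp add: mult.commute)
  ultimately show ?thesis
    using \<open>k = k'\<close> by auto
qed

lemma prime_ideal_two_right_units_eq_T_e:
  assumes I: "is_prime_ideal I" and "is_right_unit u I" "is_right_unit v I" "u \<noteq> v"
  shows "I = T_e"
proof -
  have "I \<subseteq> End1"
    using I by (simp add: is_prime_ideal_def is_ideal_def)
  moreover obtain w k w' k' where "u = nu w k" "v = nu w' k'"
    using assms(2,3) \<open>I \<subseteq> End1\<close> by (meson End1_obtain_nu is_right_unit_def subsetD)
  ultimately have "I \<subseteq> T_e"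
    using assms(2-4) right_units_eq_or_exponent_0 right_unit_subset_T_e by metis
  then show ?thesis
    using I prime_ideal_subset_T_e_eq by blast
qed

theorem mainTheorem13:
  assumes "(0::'r::comm_ring_1) \<noteq> 1"
  shows "(\<forall>w::'r W1. coeff_sum w = 1 \<longrightarrow> is_right_unit (nu w 0) T_e)
       \<and> (\<exists>u v. u \<noteq> v \<and> is_right_unit u (T_e::'r endo set) \<and> is_right_unit v T_e)
       \<and> (\<forall>I::'r endo set. is_minimal_prime_ideal I \<and> I \<noteq> T_e \<longrightarrow>
            (\<forall>u v. is_right_unit u I \<and> is_right_unit v I \<longrightarrow> u = v))
       \<and> is_minimal_prime_ideal (T_e::'r endo set)
       \<and> (\<forall>I::'r endo set. is_minimal_prime_ideal I \<and>
            (\<exists>u v. u \<noteq> v \<and> is_right_unit u I \<and> is_right_unit v I) \<longrightarrow> I = T_e)"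
proof -
  have "I = T_e" if "is_minimal_prime_ideal I" "is_right_unit u I" "is_right_unit v I" "u \<noteq> v"
    for I :: "'r endo set" and u v
    using that prime_ideal_two_right_units_eq_T_e unfolding is_minimal_prime_ideal_def by blast
  then show ?thesis
    using is_right_unit_T_e T_e_two_right_units[OF assms] is_minimal_prime_ideal_T_e by blast
qed

end
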